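(* Let $\mathcal H$ be a real Hilbert space, $t_0>0$, and let $f:\mathcal H\to\mathbb R$ be a $\mathcal C^1$ function which is $\mu$-strongly convex for some $\mu>0$, whose gradient is $L$-Lipschitz continuous, and let $x^\star$ be its unique minimizer. Let $e:[t_0,+\infty[\to\mathcal H$ and let $x:[t_0,+\infty[\to\mathcal H$ be a solution trajectory of $$\ddot x(t)+2\sqrt\mu\,\dot x(t)+\nabla f\big(x(t)+\beta\dot x(t)\big)+e(t)=0.$$ Define $\mathcal E(t)=f(x(t)+\beta\dot x(t))-\min_{\mathcal H}f+\frac12\|\sqrt\mu(x(t)-x^\star)+\dot x(t)\|^2$. Suppose (a) $0\le\beta\le\frac1{2\sqrt\mu}$ and (b) $\int_{t_0}^{+\infty}\|e(t)\|dt<+\infty$. Then: (i) for all $t\ge t_0$, $$\mathcal E(t)\le\mathcal E(t_0)e^{-\frac{\sqrt\mu}2(t-t_0)}+Me^{-\frac{\sqrt\mu}2t}\int_{t_0}^te^{\frac{\sqrt\mu}2\tau}\|e(\tau)\|d\tau,$$ where $M:=\sqrt{\mathcal E(t_0)/c}+\frac1{2c}\int_{t_0}^{+\infty}\|e(\tau)\|d\tau$ with $c=\frac{\min\{\mu,1\}}{4\max\{\beta^2L^2,1\}}$; consequently $\lim_{t\to+\infty}\mathcal E(t)=0$, $\lim_{t\to+\infty}f(x(t))=\min_{\mathcal H}f$, and $\lim_{t\to+\infty}\|x(t)-x^\star\|=\lim_{t\to+\infty}\|\nabla f(x(t))\|=\lim_{t\to+\infty}\|\dot x(t)\|=0$;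 (ii) if moreover $\|e(t)\|=\mathcal O(1/t^p)$ as $t\to+\infty$ for some $p>0$, then $\mathcal E(t)=\mathcal O(1/t^p)$, and as $t\to+\infty$: $f(x(t))-\min_{\mathcal H}f=\mathcal O(1/t^p)$, $\|x(t)-x^\star\|^2=\mathcal O(1/t^p)$, $\|\dot x(t)\|^2=\mathcal O(1/t^p)$, $\|\nabla f(x(t))\|^2=\mathcal O(1/t^p)$.
   Context: $f$ is $\mu$-strongly convex if $f-\frac\mu2\|\cdot\|^2$ is convex. *)

theory Defs
  imports "HOL-Analysis.Analysis" "HOL-Library.Landau_Symbols"
begin

definition strongly_convex :: "real \<Rightarrow> ('a::real_inner \<Rightarrow> real) \<Rightarrow> bool" where
  "strongly_convex \<mu> f \<longleftrightarrow> convex_on UNIV (\<lambda>x. f x - \<mu> / 2 * (norm x)\<^sup>2)"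

end

theory Submission
  imports Defs "HOL-Real_Asymp.Real_Asymp"
begin

(*
  Along the trajectory, with y = x + \<beta> x' and v = \<surd>\<mu> (x - x\<^sup>\<star>) + x', strong convexity and
  \<beta> \<surd>\<mu> \<le> 1/2 give the dissipation inequality E' + (\<surd>\<mu>/2) E \<le> - <v + \<beta> \<nabla>f(y), e>.
  The Lipschitz gradient gives c |v + \<beta> \<nabla>f(y)|^2 \<le> E, hence
  E' \<le> - (\<surd>\<mu>/2) E + \<surd>(E/c) |e|.  Dropping the decay term and integrating
  d/dt \<surd>E \<le> |e| / (2 \<surd>c) shows \<surd>(E/c) \<le> M for all times, so E' \<le> - (\<surd>\<mu>/2) E + M |e|,
  and the integrating factor exp (\<surd>\<mu> t / 2) gives the bound (i).  The same linear
  differential inequality yields E \<rightarrow> 0 (tails of the integrable |e| are small) and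
  E = O(t^-p) (comparison with K t^-p).  Quadratic growth and the Lipschitz gradient
  bound f(x) - min f, |x - x\<^sup>\<star>|^2, |x'|^2 and |\<nabla>f(x)|^2 by multiples of E.
*)

section \<open>Strong convexity\<close>

lemma strongly_convex_gradient_ineq:
  fixes f :: "'a::real_inner \<Rightarrow> real"
  assumes grad: "\<And>y. (f has_derivative (\<lambda>h. inner (gf y) h)) (at y)"
    and sconv: "strongly_convex \<mu> f"
  shows "f p + inner (gf p) (u - p) + \<mu>/2 * (norm (u - p))\<^sup>2 \<le> f u"
proof -
  define h where "h x = f x - \<mu>/2 * inner x x" for x
  define d where "d = u - p"
  define \<phi> where "\<phi> t = h (p + t *\<^sub>R d)" for t :: real
  have "(\<phi> has_real_derivative inner (gf p) d - \<mu> * inner p d) (at 0)"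
  proof -
    have "((\<lambda>t. p + t *\<^sub>R d) has_derivative (\<lambda>t. t *\<^sub>R d)) (at 0)"
      by (auto intro!: derivative_eq_intros)
    from has_derivative_compose[OF this, of h "\<lambda>k. inner (gf p) k - \<mu>/2 * (inner p k + inner k p)"]
    show ?thesis
      unfolding has_field_derivative_def \<phi>_def h_def
      by (rule has_derivative_eq_rhs)
        (auto intro!: derivative_eq_intros grad simp: fun_eq_iff algebra_simps inner_commute)
  qed
  moreover have "convex_on UNIV \<phi>"
  proof (rule convex_onI[OF _ convex_UNIV])
    fix t a b :: real
    assume "0 < t" "t < 1"
    have "convex_on UNIV h"
      using sconv by (simp add: strongly_convex_def h_def[abs_def] power2_norm_eq_inner)
    moreover have "p + ((1 - t) * a + t * b) *\<^sub>R d = (1 - t) *\<^sub>R (p + a *\<^sub>R d) + t *\<^sub>R (p + b *\<^sub>R d)"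
      by (simp add: algebra_simps)
    ultimately show "\<phi> ((1 - t) *\<^sub>R a + t *\<^sub>R b) \<le> (1 - t) * \<phi> a + t * \<phi> b"
      using convex_onD[of UNIV h t "p + a *\<^sub>R d" "p + b *\<^sub>R d"] \<open>0 < t\<close> \<open>t < 1\<close>
      by (simp add: \<phi>_def)
  qed
  ultimately have "inner (gf p) d - \<mu> * inner p d \<le> \<phi> 1 - \<phi> 0"
    using convex_on_imp_above_tangent[of UNIV \<phi> 0 1] by simp
  moreover have "\<phi> 1 - \<phi> 0 = f u - \<mu>/2 * inner u u - (f p - \<mu>/2 * inner p p)"
    by (simp add: \<phi>_def h_def d_def)
  moreover have "inner u u = inner p p + 2 * inner p d + inner d d"
    by (simp add: d_def algebra_simps inner_commute)
  ultimately show ?thesis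
    unfolding d_def[symmetric] power2_norm_eq_inner by (simp add: algebra_simps)
qed

locale strongly_convex_smooth_function =
  fixes f :: "'a::real_inner \<Rightarrow> real" and gf :: "'a \<Rightarrow> 'a" and xstar :: 'a and \<mu> L :: real
  assumes grad: "\<And>y. (f has_derivative (\<lambda>h. inner (gf y) h)) (at y)"
    and sconv: "strongly_convex \<mu> f"
    and lip: "lipschitz_on L UNIV gf"
    and minimizer: "\<And>y. f xstar \<le> f y"
    and mu_pos: "0 < \<mu>"
begin

lemma gradient_at_minimizer: "gf xstar = 0"
proof -
  have "(\<lambda>h. inner (gf xstar) h) = (\<lambda>h. 0)"
    by (rule differential_zero_maxmin[of xstar UNIV f]) (use grad minimizer in auto)
  then show ?thesis
    by (metis inner_eq_zero_iff)
qed

lemma quadratic_growth: "\<mu>/2 * (norm (u - xstar))\<^sup>2 \<le> f u - f xstar"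
  using strongly_convex_gradient_ineq[OF grad sconv, of xstar u] by (simp add: gradient_at_minimizer)

lemma gap_plus_growth_le_inner:
  "f u - f xstar + \<mu>/2 * (norm (u - xstar))\<^sup>2 \<le> inner (u - xstar) (gf u)"
  using strongly_convex_gradient_ineq[OF grad sconv, of u xstar]
  by (simp add: norm_minus_commute inner_diff_left inner_diff_right inner_commute)

lemma norm_gradient_le: "norm (gf u) \<le> L * norm (u - xstar)"
  using lipschitz_onD[OF lip, of u xstar] by (simp add: gradient_at_minimizer dist_norm)

lemma gap_le: "f u - f xstar \<le> L * (norm (u - xstar))\<^sup>2"
proof -
  have "0 \<le> \<mu>/2 * (norm (u - xstar))\<^sup>2"
    using mu_pos by simp
  then have "f u - f xstar \<le> inner (u - xstar) (gf u)"
    using gap_plus_growth_le_inner[of u] by linarith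
  also have "\<dots> \<le> norm (u - xstar) * norm (gf u)"
    by (rule norm_cauchy_schwarz)
  also have "\<dots> \<le> L * (norm (u - xstar))\<^sup>2"
    using mult_left_mono[OF norm_gradient_le[of u] norm_ge_zero[of "u - xstar"]]
    by (simp add: power2_eq_square mult_ac)
  finally show ?thesis .
qed

end

section \<open>Scalar differential inequalities\<close>

lemma diff_le_integral_of_deriv_le:
  fixes G G' h :: "real \<Rightarrow> real"
  assumes "a \<le> b"
    and "\<And>\<tau>. \<tau> \<in> {a..b} \<Longrightarrow> (G has_real_derivative G' \<tau>) (at \<tau> within {a..b})"
    and "\<And>\<tau>. \<tau> \<in> {a..b} \<Longrightarrow> G' \<tau> \<le> h \<tau>"
    and "h integrable_on {a..b}"
  shows "G b - G a \<le> integral {a..b} h"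
proof -
  have "(G' has_integral (G b - G a)) {a..b}"
    using assms(1,2)
    by (intro fundamental_theorem_of_calculus) (auto simp: has_real_derivative_iff_has_vector_derivative)
  then show ?thesis
    using has_integral_le[OF _ integrable_integral[OF assms(4)]] assms(3) by blast
qed

lemma integrable_on_exp_mult:
  fixes g :: "real \<Rightarrow> real"
  assumes "g integrable_on {a..b}" and "\<And>\<tau>. \<tau> \<in> {a..b} \<Longrightarrow> 0 \<le> g \<tau>"
  shows "(\<lambda>\<tau>. exp (k * \<tau>) * g \<tau>) integrable_on {a..b}"
proof -
  have cont: "continuous_on {a..b} (\<lambda>\<tau>. exp (k * \<tau>))"
    by (intro continuous_intros)
  have "(\<lambda>\<tau>. exp (k * \<tau>) * g \<tau>) absolutely_integrable_on {a..b}"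
  proof (rule absolutely_integrable_bounded_measurable_product_real)
    show "(\<lambda>\<tau>. exp (k * \<tau>)) \<in> borel_measurable (lebesgue_on {a..b})"
      using continuous_imp_measurable_on_sets_lebesgue[OF cont] by simp
    show "bounded ((\<lambda>\<tau>. exp (k * \<tau>)) ` {a..b})"
      using compact_imp_bounded[OF compact_continuous_image[OF cont]] by simp
    show "g absolutely_integrable_on {a..b}"
      using assms by (intro nonnegative_absolutely_integrable_1) auto
  qed simp
  then show ?thesis
    by (simp add: absolutely_integrable_on_def)
qed

lemma linear_differential_inequality:
  fixes E E' g :: "real \<Rightarrow> real"
  assumes "a \<le> b"
    and deriv: "\<And>\<tau>. \<tau> \<in> {a..b} \<Longrightarrow> (E has_real_derivative E' \<tau>) (at \<tau> within {a..b})"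
    and le: "\<And>\<tau>. \<tau> \<in> {a..b} \<Longrightarrow> E' \<tau> \<le> - k * E \<tau> + g \<tau>"
    and g: "g integrable_on {a..b}" "\<And>\<tau>. \<tau> \<in> {a..b} \<Longrightarrow> 0 \<le> g \<tau>"
  shows "E b \<le> E a * exp (- k * (b - a)) + exp (- k * b) * integral {a..b} (\<lambda>\<tau>. exp (k * \<tau>) * g \<tau>)"
proof -
  define G where "G \<tau> = exp (k * \<tau>) * E \<tau>" for \<tau>
  have "G b - G a \<le> integral {a..b} (\<lambda>\<tau>. exp (k * \<tau>) * g \<tau>)"
  proof (rule diff_le_integral_of_deriv_le[OF \<open>a \<le> b\<close>])
    fix \<tau> assume \<tau>: "\<tau> \<in> {a..b}"
    show "(G has_real_derivative exp (k * \<tau>) * (E' \<tau> + k * E \<tau>)) (at \<tau> within {a..b})"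
      unfolding G_def by (auto intro!: derivative_eq_intros deriv[OF \<tau>] simp: algebra_simps)
    show "exp (k * \<tau>) * (E' \<tau> + k * E \<tau>) \<le> exp (k * \<tau>) * g \<tau>"
      using le[OF \<tau>] by (intro mult_left_mono) auto
  qed (rule integrable_on_exp_mult[OF g])
  then have "exp (- k * b) * G b \<le> exp (- k * b) * (G a + integral {a..b} (\<lambda>\<tau>. exp (k * \<tau>) * g \<tau>))"
    by (intro mult_left_mono) auto
  moreover have "exp (- k * b) * G b = E b"
    unfolding G_def mult.assoc[symmetric] exp_add[symmetric] by simp
  moreover have "exp (- k * b) * G a = E a * exp (- k * (b - a))"
    unfolding G_def mult.assoc[symmetric] exp_add[symmetric] by (simp add: algebra_simps)
  ultimately show ?thesis
    by (simp add: distrib_left)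
qed

lemma linear_differential_inequality_integral:
  fixes E E' g :: "real \<Rightarrow> real"
  assumes "a \<le> b" "0 \<le> k"
    and "\<And>\<tau>. \<tau> \<in> {a..b} \<Longrightarrow> (E has_real_derivative E' \<tau>) (at \<tau> within {a..b})"
    and "\<And>\<tau>. \<tau> \<in> {a..b} \<Longrightarrow> E' \<tau> \<le> - k * E \<tau> + g \<tau>"
    and g: "g integrable_on {a..b}" "\<And>\<tau>. \<tau> \<in> {a..b} \<Longrightarrow> 0 \<le> g \<tau>"
  shows "E b \<le> E a * exp (- k * (b - a)) + integral {a..b} g"
proof -
  have int: "(\<lambda>\<tau>. exp (k * \<tau>) * g \<tau>) integrable_on {a..b}"
    by (rule integrable_on_exp_mult[OF g])
  have "exp (- k * b) * integral {a..b} (\<lambda>\<tau>. exp (k * \<tau>) * g \<tau>)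
      = integral {a..b} (\<lambda>\<tau>. exp (- k * b) * (exp (k * \<tau>) * g \<tau>))"
    by simp
  also have "\<dots> \<le> integral {a..b} g"
  proof (rule integral_le)
    show "(\<lambda>\<tau>. exp (- k * b) * (exp (k * \<tau>) * g \<tau>)) integrable_on {a..b}"
      using int by simp
    fix \<tau> assume \<tau>: "\<tau> \<in> {a..b}"
    have "k * \<tau> \<le> k * b"
      using \<tau> \<open>0 \<le> k\<close> by (intro mult_left_mono) auto
    then have "exp (- k * b) * exp (k * \<tau>) \<le> 1"
      by (simp flip: exp_add)
    then show "exp (- k * b) * (exp (k * \<tau>) * g \<tau>) \<le> g \<tau>"
      using mult_right_mono[of _ 1 "g \<tau>"] g(2)[OF \<tau>] by (simp add: mult.assoc[symmetric])
  qed (rule g)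
  finally show ?thesis
    using linear_differential_inequality[OF assms(1,3,4) g] by (meson add_left_mono order_trans)
qed

lemma comparison_linear_differential_inequality:
  fixes E E' B B' :: "real \<Rightarrow> real"
  assumes "a \<le> b"
    and dE: "\<And>\<tau>. \<tau> \<in> {a..b} \<Longrightarrow> (E has_real_derivative E' \<tau>) (at \<tau> within {a..b})"
    and dB: "\<And>\<tau>. \<tau> \<in> {a..b} \<Longrightarrow> (B has_real_derivative B' \<tau>) (at \<tau> within {a..b})"
    and le: "\<And>\<tau>. \<tau> \<in> {a..b} \<Longrightarrow> E' \<tau> + k * E \<tau> \<le> B' \<tau> + k * B \<tau>"
    and "E a \<le> B a"
  shows "E b \<le> B b"
proof -
  have "E b - B b \<le> (E a - B a) * exp (- k * (b - a))
      + exp (- k * b) * integral {a..b} (\<lambda>\<tau>. exp (k * \<tau>) * 0)"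
  proof (rule linear_differential_inequality[OF \<open>a \<le> b\<close>])
    fix \<tau> assume "\<tau> \<in> {a..b}"
    then show "((\<lambda>\<tau>. E \<tau> - B \<tau>) has_real_derivative E' \<tau> - B' \<tau>) (at \<tau> within {a..b})"
      and "E' \<tau> - B' \<tau> \<le> - k * (E \<tau> - B \<tau>) + 0"
      using dE dB le by (auto intro!: DERIV_diff simp: algebra_simps)
  qed auto
  also have "\<dots> \<le> 0"
    using \<open>E a \<le> B a\<close> by (simp add: mult_nonpos_nonneg)
  finally show ?thesis
    by simp
qed

lemma bigo_powr_of_linear_differential_inequality:
  fixes E E' g :: "real \<Rightarrow> real"
  assumes "0 < k"
    and deriv: "\<And>t. a \<le> t \<Longrightarrow> (E has_real_derivative E' t) (at t within {a..})"
    and le: "\<And>t. a \<le> t \<Longrightarrow> E' t \<le> - k * E t + g t"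
    and nonneg: "\<And>t. a \<le> t \<Longrightarrow> 0 \<le> E t"
    and g: "g \<in> O[at_top](\<lambda>t. 1 / t powr p)"
  shows "E \<in> O[at_top](\<lambda>t. 1 / t powr p)"
proof -
  obtain C where "eventually (\<lambda>t. norm (g t) \<le> C * norm (1 / t powr p)) at_top"
    using landau_o.bigE[OF g] by blast
  then obtain T\<^sub>1 where T\<^sub>1: "\<And>t. T\<^sub>1 \<le> t \<Longrightarrow> \<bar>g t\<bar> \<le> C * \<bar>1 / t powr p\<bar>"
    by (auto simp: eventually_at_top_linorder)
  define T where "T = max (max T\<^sub>1 a) (max 1 (2 * p / k))"
  have T: "T\<^sub>1 \<le> T" "a \<le> T" "1 \<le> T" "2 * p / k \<le> T"
    by (auto simp: T_def)
  define K where "K = max (2 * C / k) (E T * T powr p)"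
  have K: "2 * C / k \<le> K" "E T * T powr p \<le> K"
    by (auto simp: K_def)
  have "0 \<le> K"
    using order_trans[OF mult_nonneg_nonneg[OF nonneg[OF T(2)] powr_ge_zero] K(2)] .
  have "C \<le> K * (k / 2)"
    using K(1) \<open>0 < k\<close> by (simp add: pos_divide_le_eq)
  txt \<open>\<open>K * t powr (- p)\<close> is a supersolution once \<open>p / t \<le> k / 2\<close>.\<close>
  have bound: "E t \<le> K * t powr (- p)" if "T \<le> t" for t
  proof (rule comparison_linear_differential_inequality[OF that, where E' = E' and k = k
        and B = "\<lambda>\<tau>. K * \<tau> powr (- p)" and B' = "\<lambda>\<tau>. K * (- p * (\<tau> powr (- p) / \<tau>))"])
    fix \<tau> assume \<tau>: "\<tau> \<in> {T..t}"
    then have "T \<le> \<tau>"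
      by simp
    then have "0 < \<tau>" "a \<le> \<tau>"
      using T(2,3) by linarith+
    show "(E has_real_derivative E' \<tau>) (at \<tau> within {T..t})"
      by (rule DERIV_subset[OF deriv[OF \<open>a \<le> \<tau>\<close>]]) (use \<open>a \<le> T\<close> in auto)
    show "((\<lambda>\<tau>. K * \<tau> powr (- p)) has_real_derivative K * (- p * (\<tau> powr (- p) / \<tau>)))
        (at \<tau> within {T..t})"
      using DERIV_cmult[OF has_field_derivative_at_within[OF has_real_derivative_powr[OF \<open>0 < \<tau>\<close>]],
          of K "- p" "{T..t}"] \<open>0 < \<tau>\<close>
      by (simp add: powr_diff)
    have "2 * p / k \<le> \<tau>"
      using T(4) \<open>T \<le> \<tau>\<close> by linarith
    then have "p / \<tau> \<le> k / 2"
      using \<open>0 < k\<close> \<open>0 < \<tau>\<close> by (simp add: pos_divide_le_eq pos_le_divide_eq mult.commute)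
    then have "C \<le> K * (k - p / \<tau>)"
      using \<open>C \<le> K * (k / 2)\<close> mult_left_mono[of "k / 2" "k - p / \<tau>" K] \<open>0 \<le> K\<close> by linarith
    have "E' \<tau> + k * E \<tau> \<le> \<bar>g \<tau>\<bar>"
      using le[OF \<open>a \<le> \<tau>\<close>] by linarith
    also have "\<dots> \<le> C * \<tau> powr (- p)"
      using T\<^sub>1[of \<tau>] T(1) \<open>T \<le> \<tau>\<close> \<open>0 < \<tau>\<close> by (simp add: powr_minus_divide)
    also have "\<dots> \<le> K * (k - p / \<tau>) * \<tau> powr (- p)"
      by (rule mult_right_mono[OF \<open>C \<le> K * (k - p / \<tau>)\<close>]) simp
    finally show "E' \<tau> + k * E \<tau> \<le> K * (- p * (\<tau> powr (- p) / \<tau>)) + k * (K * \<tau> powr (- p))"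
      by (simp add: algebra_simps)
  next
    have "E T = E T * T powr p * T powr (- p)"
      using T(3) by (simp add: powr_minus)
    also have "\<dots> \<le> K * T powr (- p)"
      by (rule mult_right_mono[OF K(2)]) simp
    finally show "E T \<le> K * T powr (- p)" .
  qed
  have "eventually (\<lambda>t. norm (E t) \<le> K * norm (1 / t powr p)) at_top"
    using eventually_ge_at_top[of T]
  proof (rule eventually_mono)
    fix t assume "T \<le> t"
    then have "0 < t" "a \<le> t"
      using T(2,3) by linarith+
    then show "norm (E t) \<le> K * norm (1 / t powr p)"
      using bound[OF \<open>T \<le> t\<close>] nonneg[of t] by (simp add: powr_minus_divide)
  qed
  then show ?thesis
    by (rule bigoI)
qed

lemma sqrt_le_of_deriv_le_sqrt_mult:
  fixes E E' g :: "real \<Rightarrow> real"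
  assumes "a \<le> b"
    and deriv: "\<And>\<tau>. \<tau> \<in> {a..b} \<Longrightarrow> (E has_real_derivative E' \<tau>) (at \<tau> within {a..b})"
    and nonneg: "\<And>\<tau>. \<tau> \<in> {a..b} \<Longrightarrow> 0 \<le> E \<tau>"
    and le: "\<And>\<tau>. \<tau> \<in> {a..b} \<Longrightarrow> E' \<tau> \<le> sqrt (E \<tau>) * g \<tau>"
    and g: "g integrable_on {a..b}" "\<And>\<tau>. \<tau> \<in> {a..b} \<Longrightarrow> 0 \<le> g \<tau>"
  shows "sqrt (E b) \<le> sqrt (E a) + integral {a..b} g / 2"
proof (rule field_le_epsilon)
  fix \<epsilon> :: real
  assume "0 < \<epsilon>"
  txt \<open>\<open>sqrt\<close> is not differentiable at \<open>0\<close>, so we differentiate \<open>sqrt (E + \<epsilon>\<^sup>2)\<close> instead.\<close>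
  have "sqrt (E b + \<epsilon>\<^sup>2) - sqrt (E a + \<epsilon>\<^sup>2) \<le> integral {a..b} (\<lambda>\<tau>. g \<tau> / 2)"
  proof (rule diff_le_integral_of_deriv_le[OF \<open>a \<le> b\<close>])
    fix \<tau> assume \<tau>: "\<tau> \<in> {a..b}"
    define r where "r = sqrt (E \<tau> + \<epsilon>\<^sup>2)"
    have "0 < E \<tau> + \<epsilon>\<^sup>2"
      using nonneg[OF \<tau>] \<open>0 < \<epsilon>\<close> by (simp add: add_nonneg_pos)
    then have "0 < r"
      by (simp add: r_def)
    show "((\<lambda>\<tau>. sqrt (E \<tau> + \<epsilon>\<^sup>2)) has_real_derivative inverse r / 2 * (E' \<tau> + 0))
        (at \<tau> within {a..b})"
      unfolding r_def by (intro DERIV_chain2[OF DERIV_real_sqrt] DERIV_add deriv[OF \<tau>] DERIV_const) fact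
    have "E' \<tau> \<le> r * g \<tau>"
      using le[OF \<tau>] mult_right_mono[of "sqrt (E \<tau>)" r "g \<tau>"] g(2)[OF \<tau>]
      by (simp add: r_def)
    then have "inverse r / 2 * (E' \<tau> + 0) \<le> inverse r / 2 * (r * g \<tau>)"
      using \<open>0 < r\<close> by (intro mult_left_mono) auto
    also have "\<dots> = g \<tau> / 2"
      using \<open>0 < r\<close> by simp
    finally show "inverse r / 2 * (E' \<tau> + 0) \<le> g \<tau> / 2" .
  qed (use g in simp)
  moreover have "sqrt (E b) \<le> sqrt (E b + \<epsilon>\<^sup>2)"
    by simp
  moreover have "sqrt (E a + \<epsilon>\<^sup>2) \<le> sqrt (E a) + \<epsilon>"
    using sqrt_add_le_add_sqrt[of "E a" "\<epsilon>\<^sup>2"] nonneg[of a] \<open>a \<le> b\<close> \<open>0 < \<epsilon>\<close> by simp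
  ultimately show "sqrt (E b) \<le> sqrt (E a) + integral {a..b} g / 2 + \<epsilon>"
    unfolding integral_divide by linarith
qed

lemma eventually_integral_tail_less:
  fixes g :: "real \<Rightarrow> real"
  assumes g: "g integrable_on {a..}" "\<And>\<tau>. a \<le> \<tau> \<Longrightarrow> 0 \<le> g \<tau>" and "0 < \<epsilon>"
  shows "\<exists>T\<ge>a. \<forall>t\<ge>T. integral {T..t} g < \<epsilon>"
proof -
  define \<Phi> where "\<Phi> t = integral {a..t} g" for t
  have int: "g integrable_on {s..t}" if "a \<le> s" for s t
    using integrable_on_subinterval[OF g(1)] that by auto
  have "\<Phi> t \<le> integral {a..} g" if "a \<le> t" for t
    unfolding \<Phi>_def using that g by (intro integral_subset_le int) auto
  then have bdd: "bdd_above (\<Phi> ` {a..})"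
    by (intro bdd_aboveI[of _ "integral {a..} g"]) auto
  then obtain T where T: "a \<le> T" "Sup (\<Phi> ` {a..}) - \<epsilon> < \<Phi> T"
    using less_cSup_iff[of "\<Phi> ` {a..}" "Sup (\<Phi> ` {a..}) - \<epsilon>"] \<open>0 < \<epsilon>\<close> by auto
  have "integral {T..t} g < \<epsilon>" if "T \<le> t" for t
  proof -
    have "integral {T..t} g = \<Phi> t - \<Phi> T"
      using Henstock_Kurzweil_Integration.integral_combine[OF T(1) that int[OF order_refl]] by (simp add: \<Phi>_def)
    moreover have "\<Phi> t \<le> Sup (\<Phi> ` {a..})"
      using T(1) that by (intro cSup_upper[OF _ bdd]) auto
    ultimately show ?thesis
      using T(2) by linarith
  qed
  with T(1) show ?thesis
    by blast
qed

lemma tendsto_zero_of_linear_differential_inequality: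
  fixes E E' g :: "real \<Rightarrow> real"
  assumes "0 < k"
    and deriv: "\<And>t. a \<le> t \<Longrightarrow> (E has_real_derivative E' t) (at t within {a..})"
    and le: "\<And>t. a \<le> t \<Longrightarrow> E' t \<le> - k * E t + g t"
    and nonneg: "\<And>t. a \<le> t \<Longrightarrow> 0 \<le> E t"
    and g: "g integrable_on {a..}" "\<And>t. a \<le> t \<Longrightarrow> 0 \<le> g t"
  shows "(E \<longlongrightarrow> 0) at_top"
proof (rule order_tendstoI)
  fix c :: real
  assume "c < 0"
  show "eventually (\<lambda>t. c < E t) at_top"
  proof (rule eventually_mono[OF eventually_ge_at_top[of a]])
    show "c < E t" if "a \<le> t" for t
      using nonneg[OF that] \<open>c < 0\<close> by linarith
  qed
next
  fix \<epsilon> :: real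
  assume "0 < \<epsilon>"
  then obtain T where T: "a \<le> T" "\<And>t. T \<le> t \<Longrightarrow> integral {T..t} g < \<epsilon> / 2"
    using eventually_integral_tail_less[OF g, of "\<epsilon> / 2"] by auto
  have "((\<lambda>t. E T * exp (- k * (t - T))) \<longlongrightarrow> 0) at_top"
    using \<open>0 < k\<close> by real_asymp
  then have "eventually (\<lambda>t. E T * exp (- k * (t - T)) < \<epsilon> / 2) at_top"
    using \<open>0 < \<epsilon>\<close> by (intro order_tendstoD) auto
  then show "eventually (\<lambda>t. E t < \<epsilon>) at_top"
    using eventually_ge_at_top[of T]
  proof eventually_elim
    case (elim t)
    have "E t \<le> E T * exp (- k * (t - T)) + integral {T..t} g"
    proof (rule linear_differential_inequality_integral[OF \<open>T \<le> t\<close>, where E' = E'])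
      fix \<tau> assume "\<tau> \<in> {T..t}"
      then have "a \<le> \<tau>"
        using T(1) by simp
      show "(E has_real_derivative E' \<tau>) (at \<tau> within {T..t})"
        by (rule DERIV_subset[OF deriv[OF \<open>a \<le> \<tau>\<close>]]) (use T(1) in auto)
      show "E' \<tau> \<le> - k * E \<tau> + g \<tau>" "0 \<le> g \<tau>"
        using le g(2) \<open>a \<le> \<tau>\<close> by auto
    next
      show "g integrable_on {T..t}"
        using integrable_on_subinterval[OF g(1)] T(1) by auto
    qed (use \<open>0 < k\<close> in simp)
    with elim T(2)[of t] show ?case
      by linarith
  qed
qed

lemma tendsto_zero_if_square_le:
  fixes u E :: "'b \<Rightarrow> real"
  assumes "(E \<longlongrightarrow> 0) F" and "\<And>t. 0 \<le> u t" and "\<And>t. (u t)\<^sup>2 \<le> C * E t"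
  shows "(u \<longlongrightarrow> 0) F"
proof (rule tendsto_sandwich[OF always_eventually always_eventually tendsto_const])
  show "((\<lambda>t. sqrt (C * E t)) \<longlongrightarrow> 0) F"
    using tendsto_real_sqrt[OF tendsto_mult_right_zero[OF assms(1), of C]] by simp
  show "\<forall>t. 0 \<le> u t" "\<forall>t. u t \<le> sqrt (C * E t)"
    using assms(2,3) by (auto intro: real_le_rsqrt)
qed

lemma bigo_of_norm_le_const_mult:
  assumes "\<And>t. norm (u t) \<le> C * norm (v t)" and "v \<in> O[F](h)"
  shows "u \<in> O[F](h)"
  using landau_o.big_trans[OF bigoI[OF always_eventually] assms(2)] assms(1) by blast

section \<open>The perturbed inertial dynamics\<close>

lemma quadratic_form_nonpos:
  fixes a u w :: real
  assumes "0 \<le> a" "a \<le> 1/2"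
  shows "- 2 * u\<^sup>2 + 2 * (1 + a) * u * w - (3 - 3 * a - a\<^sup>2) * w\<^sup>2 \<le> 0"
proof -
  have "3 * a\<^sup>2 + 8 * a - 5 \<le> 0"
    using assms mult_mono[of a "1/2" a "1/2"] by (simp add: power2_eq_square)
  then have "(3 * a\<^sup>2 + 8 * a - 5) / 2 * w\<^sup>2 \<le> 0"
    by (simp add: mult_nonpos_nonneg)
  moreover have "- 2 * u\<^sup>2 + 2 * (1 + a) * u * w - (3 - 3 * a - a\<^sup>2) * w\<^sup>2
      = - 2 * (u - (1 + a) / 2 * w)\<^sup>2 + (3 * a\<^sup>2 + 8 * a - 5) / 2 * w\<^sup>2"
    by (simp add: power2_eq_square field_simps)
  ultimately show ?thesis
    using zero_le_power2[of "u - (1 + a) / 2 * w"] by linarith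
qed

text \<open>The Lyapunov inequality \<open>E' + (s/2) E \<le> - \<langle>v + \<beta> g, e\<rangle>\<close> at a single time, where
  \<open>z = y - x\<^sup>*\<close> for the extrapolated point \<open>y = x + \<beta> x'\<close>, \<open>w = x'\<close>, \<open>w' = x''\<close>,
  \<open>g = \<nabla>f y\<close>, \<open>F = f y - min f\<close> and \<open>s = \<surd>\<mu>\<close>.\<close>

lemma lyapunov_dissipation_pointwise:
  fixes z w w' g e v :: "'a::real_inner"
  assumes s: "0 < s" and \<beta>: "0 \<le> \<beta>" "\<beta> * s \<le> 1/2"
    and growth_inner: "F + s\<^sup>2/2 * (norm z)\<^sup>2 \<le> inner z g"
    and growth: "s\<^sup>2/2 * (norm z)\<^sup>2 \<le> F"
    and w': "w' = (- 2 * s) *\<^sub>R w - g - e"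
    and v: "v = s *\<^sub>R (z - \<beta> *\<^sub>R w) + w"
  shows "inner g (w + \<beta> *\<^sub>R w') + inner v (s *\<^sub>R w + w') + s/2 * (F + 1/2 * (norm v)\<^sup>2)
    \<le> - inner (v + \<beta> *\<^sub>R g) e"
proof -
  define a where "a = \<beta> * s"
  define zz where "zz = inner z z"
  define ww where "ww = inner w w"
  define gg where "gg = inner g g"
  define zw where "zw = inner z w"
  define zg where "zg = inner z g"
  define wg where "wg = inner w g"
  have nz: "(norm z)\<^sup>2 = zz" and nw: "(norm w)\<^sup>2 = ww"
    by (simp_all add: zz_def ww_def power2_norm_eq_inner)
  have a: "0 \<le> a" "a \<le> 1/2"
    using \<beta> s by (auto simp: a_def)
  have expand: "inner g (w + \<beta> *\<^sub>R w') + inner v (s *\<^sub>R w + w') + s/2 * (F + 1/2 * (norm v)\<^sup>2)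
      + inner (v + \<beta> *\<^sub>R g) e
    = - \<beta> * (gg + s * wg + s\<^sup>2/4 * ww) - s * zg + s/2 * F + s^3/4 * zz - s\<^sup>2 * (1 + a)/2 * zw
      - s * (3 - 3 * a - a\<^sup>2)/4 * ww"
    unfolding w' v power2_norm_eq_inner zz_def ww_def gg_def zw_def zg_def wg_def a_def
    by (simp add: inner_add_left inner_add_right inner_diff_left inner_diff_right
        inner_commute power2_eq_square power3_eq_cube algebra_simps; simp add: field_simps)
  have "0 \<le> \<beta> * (gg + s * wg + s\<^sup>2/4 * ww)"
  proof -
    have "gg + s * wg + s\<^sup>2/4 * ww = inner (g + (s/2) *\<^sub>R w) (g + (s/2) *\<^sub>R w)"
      unfolding gg_def wg_def ww_def
      by (simp add: inner_add_left inner_add_right inner_commute power2_eq_square algebra_simps)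
    then show ?thesis
      using \<beta> by simp
  qed
  moreover have "s * F + s^3/2 * zz \<le> s * zg"
    using mult_left_mono[OF growth_inner, of s] s unfolding zg_def[symmetric] nz
    by (simp add: algebra_simps power3_eq_cube power2_eq_square)
  moreover have "s^3/4 * zz \<le> s/2 * F"
    using mult_left_mono[OF growth, of "s/2"] s unfolding nz
    by (simp add: algebra_simps power3_eq_cube power2_eq_square)
  moreover have "- (s\<^sup>2 * (1 + a)/2 * zw) \<le> s\<^sup>2 * (1 + a)/2 * (norm z * norm w)"
    using mult_left_mono[OF norm_cauchy_schwarz[of "- z" w], of "s\<^sup>2 * (1 + a)/2"] a
    by (simp add: zw_def)
  moreover have "- (s^3) / 2 * zz + s\<^sup>2 * (1 + a)/2 * (norm z * norm w) - s * (3 - 3 * a - a\<^sup>2)/4 * ww \<le> 0"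
  proof -
    have "s/4 * (- 2 * (s * norm z)\<^sup>2 + 2 * (1 + a) * (s * norm z) * norm w
        - (3 - 3 * a - a\<^sup>2) * (norm w)\<^sup>2) \<le> 0"
      using quadratic_form_nonpos[OF a] s by (simp add: mult_nonneg_nonpos)
    then show ?thesis
      unfolding nz[symmetric] nw[symmetric] by (simp add: power2_eq_square power3_eq_cube field_simps)
  qed
  ultimately show ?thesis
    using expand by linarith
qed

locale perturbed_inertial_dynamics = strongly_convex_smooth_function f gf xstar \<mu> L
  for f :: "'a::real_inner \<Rightarrow> real" and gf xstar \<mu> L +
  fixes x x' x'' e :: "real \<Rightarrow> 'a" and \<beta> t\<^sub>0 :: real
  assumes dx: "\<And>t. t \<ge> t\<^sub>0 \<Longrightarrow> (x has_vector_derivative x' t) (at t within {t\<^sub>0..})"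
    and ddx: "\<And>t. t \<ge> t\<^sub>0 \<Longrightarrow> (x' has_vector_derivative x'' t) (at t within {t\<^sub>0..})"
    and ode: "\<And>t. t \<ge> t\<^sub>0 \<Longrightarrow>
       x'' t + (2 * sqrt \<mu>) *\<^sub>R x' t + gf (x t + \<beta> *\<^sub>R x' t) + e t = 0"
    and beta_nonneg: "0 \<le> \<beta>" and beta_le: "\<beta> \<le> 1 / (2 * sqrt \<mu>)"
    and e_int: "(\<lambda>t. norm (e t)) integrable_on {t\<^sub>0..}"
begin

definition extrap :: "real \<Rightarrow> 'a" where
  "extrap t = x t + \<beta> *\<^sub>R x' t"

definition shifted_velocity :: "real \<Rightarrow> 'a" where
  "shifted_velocity t = sqrt \<mu> *\<^sub>R (x t - xstar) + x' t"

definition energy :: "real \<Rightarrow> real" where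
  "energy t = f (extrap t) - f xstar + 1/2 * (norm (shifted_velocity t))\<^sup>2"

definition energy_deriv :: "real \<Rightarrow> real" where
  "energy_deriv t = inner (gf (extrap t)) (x' t + \<beta> *\<^sub>R x'' t)
     + inner (shifted_velocity t) (sqrt \<mu> *\<^sub>R x' t + x'' t)"

definition c :: real where
  "c = min \<mu> 1 / (4 * max (\<beta>\<^sup>2 * L\<^sup>2) 1)"

definition M :: real where
  "M = sqrt (energy t\<^sub>0 / c) + 1 / (2 * c) * integral {t\<^sub>0..} (\<lambda>\<tau>. norm (e \<tau>))"

definition dist_const :: real where
  "dist_const = 4 / \<mu> + 64 * \<beta>\<^sup>2"

lemma sqrt_mu_pos: "0 < sqrt \<mu>"
  using mu_pos by simp

lemma beta_sqrt_mu_le: "\<beta> * sqrt \<mu> \<le> 1/2"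
  using beta_le sqrt_mu_pos by (simp add: field_simps)

lemma c_pos: "0 < c"
  using mu_pos by (simp add: c_def)

lemma energy_nonneg: "0 \<le> energy t"
  using minimizer[of "extrap t"] by (simp add: energy_def)

lemma norm_shifted_velocity_le: "(norm (shifted_velocity t))\<^sup>2 \<le> 2 * energy t"
  using minimizer[of "extrap t"] by (simp add: energy_def)

lemma dist_extrap_le: "\<mu> * (norm (extrap t - xstar))\<^sup>2 \<le> 2 * energy t"
proof -
  have "\<mu> * (norm (extrap t - xstar))\<^sup>2 \<le> 2 * (f (extrap t) - f xstar)"
    using quadratic_growth[of "extrap t"] by simp
  moreover have "2 * energy t = 2 * (f (extrap t) - f xstar) + (norm (shifted_velocity t))\<^sup>2"
    by (simp add: energy_def algebra_simps)
  ultimately show ?thesis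
    using zero_le_power2[of "norm (shifted_velocity t)"] by linarith
qed

lemma shifted_velocity_eq: "shifted_velocity t = sqrt \<mu> *\<^sub>R ((extrap t - xstar) - \<beta> *\<^sub>R x' t) + x' t"
  by (simp add: shifted_velocity_def extrap_def)

lemma norm_velocity_le: "(norm (x' t))\<^sup>2 \<le> 32 * energy t"
proof -
  let ?z = "norm (extrap t - xstar)" and ?v = "norm (shifted_velocity t)" and ?w = "norm (x' t)"
  have "(1 - \<beta> * sqrt \<mu>) *\<^sub>R x' t = shifted_velocity t - sqrt \<mu> *\<^sub>R (extrap t - xstar)"
    by (simp add: shifted_velocity_eq algebra_simps)
  moreover have "norm ((1 - \<beta> * sqrt \<mu>) *\<^sub>R x' t) = (1 - \<beta> * sqrt \<mu>) * ?w"
    using beta_sqrt_mu_le by simp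
  ultimately have "(1 - \<beta> * sqrt \<mu>) * ?w \<le> ?v + sqrt \<mu> * ?z"
    using norm_triangle_ineq4[of "shifted_velocity t" "sqrt \<mu> *\<^sub>R (extrap t - xstar)"]
      sqrt_mu_pos by simp
  moreover have "1/2 * ?w \<le> (1 - \<beta> * sqrt \<mu>) * ?w"
    using beta_sqrt_mu_le by (intro mult_right_mono) auto
  ultimately have "?w \<le> 2 * ?v + 2 * (sqrt \<mu> * ?z)"
    by linarith
  then have "?w\<^sup>2 \<le> (2 * ?v + 2 * (sqrt \<mu> * ?z))\<^sup>2"
    by (rule power_mono) simp
  also have "\<dots> \<le> 8 * ?v\<^sup>2 + 8 * (sqrt \<mu> * ?z)\<^sup>2"
    using zero_le_power2[of "?v - sqrt \<mu> * ?z"] by (simp add: power2_eq_square algebra_simps)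
  also have "\<dots> = 8 * ?v\<^sup>2 + 8 * (\<mu> * ?z\<^sup>2)"
    using mu_pos by (simp add: power_mult_distrib)
  also have "\<dots> \<le> 32 * energy t"
    using norm_shifted_velocity_le[of t] dist_extrap_le[of t] by simp
  finally show ?thesis .
qed

lemma dist_le: "(norm (x t - xstar))\<^sup>2 \<le> dist_const * energy t"
proof -
  let ?z = "norm (extrap t - xstar)" and ?w = "norm (x' t)"
  have "norm (x t - xstar) \<le> ?z + \<beta> * ?w"
    using norm_triangle_ineq4[of "extrap t - xstar" "\<beta> *\<^sub>R x' t"] beta_nonneg
    by (simp add: extrap_def)
  then have "(norm (x t - xstar))\<^sup>2 \<le> (?z + \<beta> * ?w)\<^sup>2"
    by (rule power_mono) simp
  also have "\<dots> \<le> 2 * ?z\<^sup>2 + 2 * \<beta>\<^sup>2 * ?w\<^sup>2"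
    using zero_le_power2[of "?z - \<beta> * ?w"] by (simp add: power2_eq_square algebra_simps)
  also have "\<dots> \<le> 2 * (2 * energy t / \<mu>) + 2 * \<beta>\<^sup>2 * (32 * energy t)"
    using dist_extrap_le[of t] norm_velocity_le[of t] mu_pos
    by (intro add_mono mult_left_mono) (auto simp: field_simps)
  also have "\<dots> = dist_const * energy t"
    using mu_pos by (simp add: dist_const_def field_simps)
  finally show ?thesis .
qed

lemma four_c_le_one: "4 * c \<le> 1"
proof -
  have "min \<mu> 1 \<le> max (\<beta>\<^sup>2 * L\<^sup>2) 1"
    by linarith
  then show ?thesis
    by (simp add: c_def divide_le_eq)
qed

lemma four_c_mult_le_mu: "4 * c * (\<beta>\<^sup>2 * L\<^sup>2) \<le> \<mu>"
proof -
  define m where "m = max (\<beta>\<^sup>2 * L\<^sup>2) 1"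
  have "4 * c * (\<beta>\<^sup>2 * L\<^sup>2) = min \<mu> 1 * (\<beta>\<^sup>2 * L\<^sup>2 / m)"
    by (simp add: c_def m_def)
  also have "\<dots> \<le> min \<mu> 1"
    using mu_pos by (intro mult_left_le) (auto simp: m_def divide_le_eq)
  finally show ?thesis
    by simp
qed

lemma c_mult_le_energy: "c * (norm (shifted_velocity t + \<beta> *\<^sub>R gf (extrap t)))\<^sup>2 \<le> energy t"
proof -
  let ?z = "norm (extrap t - xstar)" and ?v = "norm (shifted_velocity t)"
  have "norm (shifted_velocity t + \<beta> *\<^sub>R gf (extrap t)) \<le> ?v + \<beta> * (L * ?z)"
    using norm_triangle_ineq[of "shifted_velocity t" "\<beta> *\<^sub>R gf (extrap t)"]
      mult_left_mono[OF norm_gradient_le[of "extrap t"] beta_nonneg] beta_nonneg by simp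
  then have "(norm (shifted_velocity t + \<beta> *\<^sub>R gf (extrap t)))\<^sup>2 \<le> (?v + \<beta> * (L * ?z))\<^sup>2"
    by (rule power_mono) simp
  also have "\<dots> \<le> 2 * ?v\<^sup>2 + 2 * (\<beta>\<^sup>2 * L\<^sup>2) * ?z\<^sup>2"
    using zero_le_power2[of "?v - \<beta> * (L * ?z)"] by (simp add: power2_eq_square algebra_simps)
  finally have "c * (norm (shifted_velocity t + \<beta> *\<^sub>R gf (extrap t)))\<^sup>2
      \<le> c * (2 * ?v\<^sup>2 + 2 * (\<beta>\<^sup>2 * L\<^sup>2) * ?z\<^sup>2)"
    using c_pos by (intro mult_left_mono) auto
  also have "\<dots> = (4 * c) * (1/2 * ?v\<^sup>2) + (4 * c * (\<beta>\<^sup>2 * L\<^sup>2)) * (1/2 * ?z\<^sup>2)"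
    by (simp add: algebra_simps)
  also have "\<dots> \<le> 1/2 * ?v\<^sup>2 + \<mu> * (1/2 * ?z\<^sup>2)"
    using mult_right_mono[OF four_c_le_one, of "1/2 * ?v\<^sup>2"]
      mult_right_mono[OF four_c_mult_le_mu, of "1/2 * ?z\<^sup>2"] by simp
  also have "\<dots> \<le> energy t"
    using quadratic_growth[of "extrap t"] by (simp add: energy_def)
  finally show ?thesis .
qed

lemma energy_has_derivative:
  assumes "t\<^sub>0 \<le> t"
  shows "(energy has_real_derivative energy_deriv t) (at t within {t\<^sub>0..})"
proof -
  have dy: "(extrap has_vector_derivative x' t + \<beta> *\<^sub>R x'' t) (at t within {t\<^sub>0..})"
    unfolding extrap_def[abs_def] using dx[OF assms] ddx[OF assms]
    by (auto intro!: derivative_eq_intros)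
  have dv: "(shifted_velocity has_vector_derivative sqrt \<mu> *\<^sub>R x' t + x'' t) (at t within {t\<^sub>0..})"
    unfolding shifted_velocity_def[abs_def] using dx[OF assms] ddx[OF assms]
    by (auto intro!: derivative_eq_intros)
  have "((\<lambda>t. f (extrap t)) has_real_derivative inner (gf (extrap t)) (x' t + \<beta> *\<^sub>R x'' t))
      (at t within {t\<^sub>0..})"
    using has_derivative_compose[OF dy[unfolded has_vector_derivative_def] grad]
    unfolding has_field_derivative_def by (rule has_derivative_eq_rhs) (simp add: fun_eq_iff)
  moreover have "((\<lambda>t. inner (shifted_velocity t) (shifted_velocity t)) has_real_derivative
      2 * inner (shifted_velocity t) (sqrt \<mu> *\<^sub>R x' t + x'' t)) (at t within {t\<^sub>0..})"
    using bounded_bilinear.has_vector_derivative[OF bounded_bilinear_inner dv dv]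
    by (simp add: has_real_derivative_iff_has_vector_derivative inner_commute)
  ultimately show ?thesis
    unfolding energy_def[abs_def] energy_deriv_def power2_norm_eq_inner
    by (auto intro!: derivative_eq_intros)
qed

lemma energy_has_derivative_on_interval:
  "t\<^sub>0 \<le> a \<Longrightarrow> \<tau> \<in> {a..b} \<Longrightarrow> (energy has_real_derivative energy_deriv \<tau>) (at \<tau> within {a..b})"
  by (rule DERIV_subset[OF energy_has_derivative]) auto

lemma energy_dissipation:
  assumes "t\<^sub>0 \<le> t"
  shows "energy_deriv t + sqrt \<mu> / 2 * energy t
    \<le> - inner (shifted_velocity t + \<beta> *\<^sub>R gf (extrap t)) (e t)"
proof -
  have sq: "(sqrt \<mu>)\<^sup>2 = \<mu>"
    using mu_pos by simp
  have "inner (gf (extrap t)) (x' t + \<beta> *\<^sub>R x'' t) + inner (shifted_velocity t) (sqrt \<mu> *\<^sub>R x' t + x'' t)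
      + sqrt \<mu> / 2 * (f (extrap t) - f xstar + 1/2 * (norm (shifted_velocity t))\<^sup>2)
    \<le> - inner (shifted_velocity t + \<beta> *\<^sub>R gf (extrap t)) (e t)"
  proof (rule lyapunov_dissipation_pointwise[OF sqrt_mu_pos beta_nonneg beta_sqrt_mu_le])
    show "f (extrap t) - f xstar + (sqrt \<mu>)\<^sup>2/2 * (norm (extrap t - xstar))\<^sup>2
        \<le> inner (extrap t - xstar) (gf (extrap t))"
      using gap_plus_growth_le_inner[of "extrap t"] by (simp add: sq)
    show "(sqrt \<mu>)\<^sup>2/2 * (norm (extrap t - xstar))\<^sup>2 \<le> f (extrap t) - f xstar"
      using quadratic_growth[of "extrap t"] by (simp add: sq)
    show "x'' t = (- 2 * sqrt \<mu>) *\<^sub>R x' t - gf (extrap t) - e t"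
      using ode[OF assms] by (simp add: extrap_def algebra_simps eq_neg_iff_add_eq_0 flip: add_eq_0_iff2)
    show "shifted_velocity t = sqrt \<mu> *\<^sub>R (extrap t - xstar - \<beta> *\<^sub>R x' t) + x' t"
      by (rule shifted_velocity_eq)
  qed
  then show ?thesis
    by (simp add: energy_deriv_def energy_def)
qed

lemma energy_deriv_le:
  assumes "t\<^sub>0 \<le> t"
  shows "energy_deriv t \<le> - (sqrt \<mu> / 2) * energy t + sqrt (energy t / c) * norm (e t)"
proof -
  let ?u = "shifted_velocity t + \<beta> *\<^sub>R gf (extrap t)"
  have "norm ?u \<le> sqrt (energy t / c)"
    using c_mult_le_energy[of t] c_pos by (intro real_le_rsqrt) (simp add: field_simps)
  have "- inner ?u (e t) = inner (- ?u) (e t)"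
    by (simp only: inner_minus_left)
  also have "\<dots> \<le> norm (- ?u) * norm (e t)"
    by (rule norm_cauchy_schwarz)
  also have "\<dots> \<le> sqrt (energy t / c) * norm (e t)"
    unfolding norm_minus_cancel using \<open>norm ?u \<le> sqrt (energy t / c)\<close>
    by (rule mult_right_mono) simp
  finally show ?thesis
    using energy_dissipation[OF assms] by simp
qed

lemma norm_e_integrable: "t\<^sub>0 \<le> a \<Longrightarrow> (\<lambda>t. norm (e t)) integrable_on {a..b}"
  using integrable_on_subinterval[OF e_int] by auto

lemma sqrt_energy_le_M:
  assumes "t\<^sub>0 \<le> t"
  shows "sqrt (energy t / c) \<le> M"
proof -
  have "sqrt (energy t) \<le> sqrt (energy t\<^sub>0) + integral {t\<^sub>0..t} (\<lambda>\<tau>. norm (e \<tau>) / sqrt c) / 2"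
  proof (rule sqrt_le_of_deriv_le_sqrt_mult[OF assms, where E' = energy_deriv])
    fix \<tau> assume \<tau>: "\<tau> \<in> {t\<^sub>0..t}"
    show "(energy has_real_derivative energy_deriv \<tau>) (at \<tau> within {t\<^sub>0..t})"
      by (rule energy_has_derivative_on_interval[OF order_refl \<tau>])
    have "energy_deriv \<tau> \<le> - (sqrt \<mu> / 2) * energy \<tau> + sqrt (energy \<tau> / c) * norm (e \<tau>)"
      using energy_deriv_le \<tau> by simp
    moreover have "0 \<le> sqrt \<mu> / 2 * energy \<tau>"
      using energy_nonneg[of \<tau>] sqrt_mu_pos by simp
    ultimately show "energy_deriv \<tau> \<le> sqrt (energy \<tau>) * (norm (e \<tau>) / sqrt c)"
      by (simp add: real_sqrt_divide)
  qed (use energy_nonneg norm_e_integrable c_pos in auto)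
  also have "integral {t\<^sub>0..t} (\<lambda>\<tau>. norm (e \<tau>) / sqrt c) \<le> integral {t\<^sub>0..} (\<lambda>\<tau>. norm (e \<tau>)) / sqrt c"
    using integral_subset_le[OF _ norm_e_integrable[OF order_refl] e_int] assms c_pos
    by (simp add: divide_right_mono)
  finally have "sqrt (energy t) / sqrt c
      \<le> (sqrt (energy t\<^sub>0) + integral {t\<^sub>0..} (\<lambda>\<tau>. norm (e \<tau>)) / sqrt c / 2) / sqrt c"
    using c_pos by (simp add: divide_right_mono)
  also have "\<dots> = M"
    using c_pos by (simp add: M_def real_sqrt_divide field_simps)
  finally show ?thesis
    by (simp add: real_sqrt_divide)
qed

lemma M_nonneg: "0 \<le> M"
proof -
  have "0 \<le> sqrt (energy t\<^sub>0 / c)"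
    using energy_nonneg c_pos by simp
  then show ?thesis
    using sqrt_energy_le_M[OF order_refl] by linarith
qed

lemma energy_deriv_le_M:
  assumes "t\<^sub>0 \<le> t"
  shows "energy_deriv t \<le> - (sqrt \<mu> / 2) * energy t + M * norm (e t)"
  using energy_deriv_le[OF assms] mult_right_mono[OF sqrt_energy_le_M[OF assms] norm_ge_zero[of "e t"]]
  by linarith

lemma energy_le:
  assumes "t\<^sub>0 \<le> t"
  shows "energy t \<le> energy t\<^sub>0 * exp (- (sqrt \<mu> / 2) * (t - t\<^sub>0))
    + M * exp (- (sqrt \<mu> / 2) * t) * integral {t\<^sub>0..t} (\<lambda>\<tau>. exp ((sqrt \<mu> / 2) * \<tau>) * norm (e \<tau>))"
proof -
  have "integral {t\<^sub>0..t} (\<lambda>\<tau>. exp ((sqrt \<mu> / 2) * \<tau>) * (M * norm (e \<tau>)))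
      = M * integral {t\<^sub>0..t} (\<lambda>\<tau>. exp ((sqrt \<mu> / 2) * \<tau>) * norm (e \<tau>))"
    by (subst mult.left_commute) (rule integral_mult_right)
  moreover have "energy t \<le> energy t\<^sub>0 * exp (- (sqrt \<mu> / 2) * (t - t\<^sub>0))
    + exp (- (sqrt \<mu> / 2) * t) * integral {t\<^sub>0..t} (\<lambda>\<tau>. exp ((sqrt \<mu> / 2) * \<tau>) * (M * norm (e \<tau>)))"
  proof (rule linear_differential_inequality[OF assms, where E' = energy_deriv])
    fix \<tau> assume "\<tau> \<in> {t\<^sub>0..t}"
    then show "(energy has_real_derivative energy_deriv \<tau>) (at \<tau> within {t\<^sub>0..t})"
      and "energy_deriv \<tau> \<le> - (sqrt \<mu> / 2) * energy \<tau> + M * norm (e \<tau>)"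
      and "0 \<le> M * norm (e \<tau>)"
      using energy_has_derivative_on_interval energy_deriv_le_M M_nonneg by auto
  qed (use integrable_on_cmult_left[OF norm_e_integrable[OF order_refl], of M] in simp)
  ultimately show ?thesis
    by (simp add: mult_ac)
qed

lemma energy_tendsto_zero: "(energy \<longlongrightarrow> 0) at_top"
proof (rule tendsto_zero_of_linear_differential_inequality)
  show "0 < sqrt \<mu> / 2"
    using sqrt_mu_pos by simp
  show "(\<lambda>t. M * norm (e t)) integrable_on {t\<^sub>0..}"
    using integrable_on_cmult_left[OF e_int, of M] by simp
qed (use energy_has_derivative energy_deriv_le_M energy_nonneg M_nonneg in auto)

lemma f_gap_le: "f (x t) - f xstar \<le> L * dist_const * energy t"
  using order_trans[OF gap_le mult_left_mono[OF dist_le lipschitz_on_nonneg[OF lip]]]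
  by (simp add: mult_ac)

lemma f_tendsto_min: "((\<lambda>t. f (x t)) \<longlongrightarrow> f xstar) at_top"
proof (rule LIM_zero_cancel, rule tendsto_sandwich[OF always_eventually always_eventually tendsto_const])
  show "((\<lambda>t. L * dist_const * energy t) \<longlongrightarrow> 0) at_top"
    using tendsto_mult_right_zero[OF energy_tendsto_zero] by simp
  show "\<forall>t. 0 \<le> f (x t) - f xstar"
    using minimizer by simp
  show "\<forall>t. f (x t) - f xstar \<le> L * dist_const * energy t"
    using f_gap_le by simp
qed

lemma dist_tendsto_zero: "((\<lambda>t. norm (x t - xstar)) \<longlongrightarrow> 0) at_top"
  by (rule tendsto_zero_if_square_le[OF energy_tendsto_zero _ dist_le]) simp

lemma norm_gradient_sq_le: "(norm (gf (x t)))\<^sup>2 \<le> L\<^sup>2 * dist_const * energy t"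
proof -
  have "(norm (gf (x t)))\<^sup>2 \<le> L\<^sup>2 * (norm (x t - xstar))\<^sup>2"
    using power_mono[OF norm_gradient_le[of "x t"] norm_ge_zero] by (simp add: power_mult_distrib)
  also have "\<dots> \<le> L\<^sup>2 * (dist_const * energy t)"
    by (rule mult_left_mono[OF dist_le]) simp
  finally show ?thesis
    by (simp add: mult_ac)
qed

lemma gradient_tendsto_zero: "((\<lambda>t. norm (gf (x t))) \<longlongrightarrow> 0) at_top"
  by (rule tendsto_zero_if_square_le[OF energy_tendsto_zero _ norm_gradient_sq_le]) simp

lemma velocity_tendsto_zero: "((\<lambda>t. norm (x' t)) \<longlongrightarrow> 0) at_top"
  by (rule tendsto_zero_if_square_le[OF energy_tendsto_zero _ norm_velocity_le]) simp

context
  fixes p :: real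
  assumes e_bigo: "(\<lambda>t. norm (e t)) \<in> O[at_top](\<lambda>t. 1 / t powr p)"
begin

lemma energy_bigo: "energy \<in> O[at_top](\<lambda>t. 1 / t powr p)"
proof (rule bigo_powr_of_linear_differential_inequality)
  show "0 < sqrt \<mu> / 2"
    using sqrt_mu_pos by simp
  show "(\<lambda>t. M * norm (e t)) \<in> O[at_top](\<lambda>t. 1 / t powr p)"
    using M_nonneg by (intro bigo_of_norm_le_const_mult[OF _ e_bigo, of _ M]) simp
qed (use energy_has_derivative energy_deriv_le_M energy_nonneg in auto)

lemma bigo_of_le_energy: "(\<And>t. \<bar>u t\<bar> \<le> C * energy t) \<Longrightarrow> u \<in> O[at_top](\<lambda>t. 1 / t powr p)"
  using energy_nonneg by (intro bigo_of_norm_le_const_mult[OF _ energy_bigo]) auto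

lemma f_gap_bigo: "(\<lambda>t. f (x t) - f xstar) \<in> O[at_top](\<lambda>t. 1 / t powr p)"
  using minimizer f_gap_le by (intro bigo_of_le_energy) (simp add: abs_le_iff)

lemma dist_sq_bigo: "(\<lambda>t. (norm (x t - xstar))\<^sup>2) \<in> O[at_top](\<lambda>t. 1 / t powr p)"
  using dist_le by (intro bigo_of_le_energy) simp

lemma velocity_sq_bigo: "(\<lambda>t. (norm (x' t))\<^sup>2) \<in> O[at_top](\<lambda>t. 1 / t powr p)"
  using norm_velocity_le by (intro bigo_of_le_energy) simp

lemma gradient_sq_bigo: "(\<lambda>t. (norm (gf (x t)))\<^sup>2) \<in> O[at_top](\<lambda>t. 1 / t powr p)"
  using norm_gradient_sq_le by (intro bigo_of_le_energy) simp

end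

end

theorem theorem10:
  fixes f :: "'a::{real_inner, complete_space} \<Rightarrow> real"
    and gf :: "'a \<Rightarrow> 'a"
    and x x' x'' e :: "real \<Rightarrow> 'a"
    and xstar :: 'a
    and \<mu> L \<beta> t\<^sub>0 :: real
  assumes t0_pos: "t\<^sub>0 > 0"
    and mu_pos: "\<mu> > 0"
    and grad: "\<And>y. (f has_derivative (\<lambda>h. inner (gf y) h)) (at y)"
    and grad_cont: "continuous_on UNIV gf"
    and sconv: "strongly_convex \<mu> f"
    and lip: "lipschitz_on L UNIV gf"
    and minimizer: "\<And>y. f xstar \<le> f y"
    and dx: "\<And>t. t \<ge> t\<^sub>0 \<Longrightarrow> (x has_vector_derivative x' t) (at t within {t\<^sub>0..})"
    and ddx: "\<And>t. t \<ge> t\<^sub>0 \<Longrightarrow> (x' has_vector_derivative x'' t) (at t within {t\<^sub>0..})"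
    and ode: "\<And>t. t \<ge> t\<^sub>0 \<Longrightarrow>
       x'' t + (2 * sqrt \<mu>) *\<^sub>R x' t + gf (x t + \<beta> *\<^sub>R x' t) + e t = 0"
    and beta: "0 \<le> \<beta>" "\<beta> \<le> 1 / (2 * sqrt \<mu>)"
    and e_int: "(\<lambda>t. norm (e t)) integrable_on {t\<^sub>0..}"
  defines "E \<equiv> \<lambda>t. f (x t + \<beta> *\<^sub>R x' t) - f xstar
                    + 1/2 * (norm (sqrt \<mu> *\<^sub>R (x t - xstar) + x' t))\<^sup>2"
    and "c \<equiv> min \<mu> 1 / (4 * max (\<beta>\<^sup>2 * L\<^sup>2) 1)"
  defines "M \<equiv> sqrt (E t\<^sub>0 / c) + 1 / (2 * c) * integral {t\<^sub>0..} (\<lambda>\<tau>. norm (e \<tau>))"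
  shows "(\<forall>t\<ge>t\<^sub>0. E t \<le> E t\<^sub>0 * exp (- (sqrt \<mu> / 2) * (t - t\<^sub>0))
              + M * exp (- (sqrt \<mu> / 2) * t)
                  * integral {t\<^sub>0..t} (\<lambda>\<tau>. exp ((sqrt \<mu> / 2) * \<tau>) * norm (e \<tau>)))
         \<and> (E \<longlongrightarrow> 0) at_top
         \<and> ((\<lambda>t. f (x t)) \<longlongrightarrow> f xstar) at_top
         \<and> ((\<lambda>t. norm (x t - xstar)) \<longlongrightarrow> 0) at_top
         \<and> ((\<lambda>t. norm (gf (x t))) \<longlongrightarrow> 0) at_top
         \<and> ((\<lambda>t. norm (x' t)) \<longlongrightarrow> 0) at_top
         \<and> (\<forall>p>0. (\<lambda>t. norm (e t)) \<in> O[at_top](\<lambda>t. 1 / t powr p) \<longrightarrow>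
              E \<in> O[at_top](\<lambda>t. 1 / t powr p)
            \<and> (\<lambda>t. f (x t) - f xstar) \<in> O[at_top](\<lambda>t. 1 / t powr p)
            \<and> (\<lambda>t. (norm (x t - xstar))\<^sup>2) \<in> O[at_top](\<lambda>t. 1 / t powr p)
            \<and> (\<lambda>t. (norm (x' t))\<^sup>2) \<in> O[at_top](\<lambda>t. 1 / t powr p)
            \<and> (\<lambda>t. (norm (gf (x t)))\<^sup>2) \<in> O[at_top](\<lambda>t. 1 / t powr p))"
proof -
  interpret D: perturbed_inertial_dynamics f gf xstar \<mu> L x x' x'' e \<beta> t\<^sub>0
    by unfold_locales (use grad sconv lip minimizer mu_pos dx ddx ode beta e_int in auto)
  have E_eq: "E = D.energy"
    by (simp add: E_def fun_eq_iff D.energy_def D.extrap_def D.shifted_velocity_def)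
  have M_eq: "M = D.M"
    by (simp add: M_def D.M_def E_eq c_def D.c_def)
  show ?thesis
    unfolding E_eq M_eq
    using D.energy_le D.energy_tendsto_zero D.f_tendsto_min D.dist_tendsto_zero
      D.gradient_tendsto_zero D.velocity_tendsto_zero D.energy_bigo D.f_gap_bigo
      D.dist_sq_bigo D.velocity_sq_bigo D.gradient_sq_bigo
    by blast
qed

end
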